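(* Let $A$ and $B$ be finite-dimensional Hilbert spaces. For any $\mathcal{T}\in\mathrm{TPCP}(B,A)$, any $\sigma\in\mathrm{P}(A)$ and any $\mathcal{N}\in\mathrm{TPCP}(A,B)$, the function $\Delta_{\mathcal{T},\sigma,\mathcal{N}}:\mathrm{S}_\sigma(A)\to\mathbb{R}\cup\{-\infty\}$, \[ \Delta_{\mathcal{T},\sigma,\mathcal{N}}(\rho):=D(\rho\|\sigma)-D\bigl(\mathcal{N}(\rho)\|\mathcal{N}(\sigma)\bigr)-D_{\mathbb{M}}\bigl(\rho\,\|\,(\mathcal{T}\circ\mathcal{N})(\rho)\bigr), \] is upper semicontinuous.
   Context: $\mathrm{S}(A)$: density operators on $A$; $\mathrm{P}(A)$: non-negative operators on $A$; $\mathrm{TPCP}(A,B)$: quantum channels from $A$ to $B$. $\mathrm{S}_\sigma(A):=\{\rho\in\mathrm{S}(A):\mathrm{supp}(\rho)\subseteq\mathrm{supp}(\sigma)\}$. $D(\rho\|\sigma):=\mathrm{tr}(\rho(\log\rho-\log\sigma))$ if $\mathrm{supp}(\rho)\subseteq\mathrm{supp}(\sigma)$, $+\infty$ otherwise. $D_{\mathbb{M}}(\rho\|\tau):=\sup D(\mathcal{M}(\rho)\|\mathcal{M}(\tau))$ over all finite POVMs $\{M_x\}$ with $\mathcal{M}(\omega)=\sum_x\mathrm{tr}(\omega M_x)|x\rangle\langle x|$. *)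

theory Defs
  imports "HOL-Analysis.Analysis"
begin

text \<open>Operators on a finite-dimensional Hilbert space A are complex matrices
  indexed by a finite type 'a, i.e. elements of complex^'a^'a (with the
  Euclidean topology of this finite-dimensional space).\<close>

definition cadj :: "complex^'n^'m \<Rightarrow> complex^'m^'n" where
  "cadj M = (\<chi> i j. cnj (M $ j $ i))"

definition cinner :: "complex^'n \<Rightarrow> complex^'n \<Rightarrow> complex" where
  "cinner v w = (\<Sum>i\<in>UNIV. cnj (v $ i) * w $ i)"

definition psd :: "complex^'n^'n \<Rightarrow> bool" where
  "psd M \<longleftrightarrow> (\<forall>v. cinner v (M *v v) \<in> \<real> \<and> 0 \<le> Re (cinner v (M *v v)))"

definition density :: "complex^'n^'n \<Rightarrow> bool" where
  "density \<rho> \<longleftrightarrow> psd \<rho> \<and> trace \<rho> = 1"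

definition supp :: "complex^'n^'n \<Rightarrow> (complex^'n) set" where
  "supp M = range (\<lambda>v. M *v v)"

definition S_sub :: "complex^'n^'n \<Rightarrow> (complex^'n^'n) set" where
  "S_sub \<sigma> = {\<rho>. density \<rho> \<and> supp \<rho> \<subseteq> supp \<sigma>}"

definition unitary_mat :: "complex^'n^'n \<Rightarrow> bool" where
  "unitary_mat U \<longleftrightarrow> cadj U ** U = mat 1 \<and> U ** cadj U = mat 1"

definition diag_mat :: "('n \<Rightarrow> real) \<Rightarrow> complex^'n^'n" where
  "diag_mat l = (\<chi> i j. if i = j then complex_of_real (l i) else 0)"

definition mat_fun :: "(real \<Rightarrow> real) \<Rightarrow> complex^'n^'n \<Rightarrow> complex^'n^'n" where
  "mat_fun f M = (SOME B. \<exists>U l. unitary_mat U \<and> M = U ** diag_mat l ** cadj U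
                          \<and> B = U ** diag_mat (f \<circ> l) ** cadj U)"

text \<open>Logarithm on the support (eigenvalue 0 is sent to 0; this implements the
  usual convention 0 log 0 = 0 and restriction to the support).\<close>
definition mat_log :: "complex^'n^'n \<Rightarrow> complex^'n^'n" where
  "mat_log M = mat_fun (\<lambda>x. if x > 0 then ln x else 0) M"

definition rel_ent :: "complex^'n^'n \<Rightarrow> complex^'n^'n \<Rightarrow> ereal" where
  "rel_ent \<rho> \<sigma> = (if supp \<rho> \<subseteq> supp \<sigma>
      then ereal (Re (trace (\<rho> ** (mat_log \<rho> - mat_log \<sigma>)))) else \<infinity>)"

definition tpcp :: "(complex^'a^'a \<Rightarrow> complex^'b^'b) \<Rightarrow> bool" where
  "tpcp N \<longleftrightarrow> (\<exists>(m::nat) (K :: nat \<Rightarrow> complex^'a^'b).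
      N = (\<lambda>X. \<Sum>k<m. K k ** X ** cadj (K k)) \<and>
      (\<Sum>k<m. cadj (K k) ** K k) = mat 1)"

definition povm :: "nat \<Rightarrow> (nat \<Rightarrow> complex^'n^'n) \<Rightarrow> bool" where
  "povm n M \<longleftrightarrow> (\<forall>x<n. psd (M x)) \<and> (\<Sum>x<n. M x) = mat 1"

definition classical_rel_ent :: "nat \<Rightarrow> (nat \<Rightarrow> real) \<Rightarrow> (nat \<Rightarrow> real) \<Rightarrow> ereal" where
  "classical_rel_ent n p q = (if (\<forall>x<n. q x = 0 \<longrightarrow> p x = 0)
      then ereal (\<Sum>x\<in>{x. x < n \<and> p x \<noteq> 0}. p x * (ln (p x) - ln (q x))) else \<infinity>)"

definition meas_rel_ent :: "complex^'n^'n \<Rightarrow> complex^'n^'n \<Rightarrow> ereal" where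
  "meas_rel_ent \<rho> \<tau> = (SUP (n, M) \<in> {(n, M). povm n M}.
      classical_rel_ent n (\<lambda>x. Re (trace (\<rho> ** M x))) (\<lambda>x. Re (trace (\<tau> ** M x))))"

definition usc_on :: "'a::topological_space set \<Rightarrow> ('a \<Rightarrow> ereal) \<Rightarrow> bool" where
  "usc_on S f \<longleftrightarrow> (\<forall>x\<in>S. \<forall>c. f x < c \<longrightarrow> (\<forall>\<^sub>F y in at x within S. f y < c))"

end

(* On S_sigma(A) the support conditions hold for (rho, sigma) and, since channels preserve
   them, for (N rho, N sigma); so the first two terms are finite and equal
   tr rho (log rho - log sigma) - tr N(rho) (log N(rho) - log N(sigma)).  This is continuous in
   rho: the terms against the fixed sigma and N(sigma) are linear, and rho |-> tr rho log rho is a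
   uniform limit of the continuous maps rho |-> tr q(rho), q a polynomial approximating x log x on
   [0, 1] (Weierstrass).  For a fixed POVM the measured probabilities depend continuously on rho,
   and the classical relative entropy is lower semicontinuous in them, so the measured relative
   entropy, a supremum of such functions, is lower semicontinuous.  A continuous real function
   minus a lower semicontinuous one is upper semicontinuous. *)

theory Submission
  imports Defs "HOL-Real_Asymp.Real_Asymp"
begin

section \<open>The complex inner product\<close>

lemma cinner_add_left: "cinner (u + v) w = cinner u w + cinner v w"
  by (simp add: cinner_def sum.distrib distrib_right)

lemma cinner_add_right: "cinner w (u + v) = cinner w u + cinner w v"
  by (simp add: cinner_def sum.distrib distrib_left)

lemma cinner_diff_left: "cinner (u - v) w = cinner u w - cinner v w"
  by (simp add: cinner_def sum_subtractf left_diff_distrib)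

lemma cinner_diff_right: "cinner w (u - v) = cinner w u - cinner w v"
  by (simp add: cinner_def sum_subtractf right_diff_distrib)

lemma cinner_scale_left: "cinner (c *s u) w = cnj c * cinner u w"
  by (simp add: cinner_def sum_distrib_left mult.assoc)

lemma cinner_scale_right: "cinner w (c *s u) = c * cinner w u"
  by (simp add: cinner_def sum_distrib_left mult.left_commute)

lemma cinner_scaleR_left: "cinner (c *\<^sub>R u) w = of_real c * cinner u w"
  unfolding cinner_def scaleR_vec_def by (simp add: sum_distrib_left mult.assoc scaleR_conv_of_real)

lemma cinner_scaleR_right: "cinner w (c *\<^sub>R u) = of_real c * cinner w u"
  unfolding cinner_def scaleR_vec_def
  by (simp add: sum_distrib_left mult.left_commute scaleR_conv_of_real)

lemma cinner_commute: "cinner u w = cnj (cinner w u)"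
  by (simp add: cinner_def mult.commute)

lemma cinner_zero_left [simp]: "cinner 0 w = 0"
  by (simp add: cinner_def)

lemma cinner_zero_right [simp]: "cinner w 0 = 0"
  by (simp add: cinner_def)

lemma cinner_sum_right: "finite A \<Longrightarrow> cinner w (\<Sum>a\<in>A. f a) = (\<Sum>a\<in>A. cinner w (f a))"
  by (induct A rule: finite_induct) (auto simp: cinner_add_right)

lemma cinner_self: "cinner v v = of_real ((norm v)\<^sup>2)"
proof -
  have "cinner v v = (\<Sum>i\<in>UNIV. of_real ((norm (v $ i))\<^sup>2))"
    unfolding cinner_def by (intro sum.cong refl) (metis complex_norm_square mult.commute)
  also have "\<dots> = of_real (\<Sum>i\<in>UNIV. (norm (v $ i))\<^sup>2)" by simp
  also have "(\<Sum>i\<in>UNIV. (norm (v $ i))\<^sup>2) = (norm v)\<^sup>2"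
    unfolding norm_vec_def L2_set_def by (simp add: sum_nonneg)
  finally show ?thesis .
qed

lemma cinner_adj: "cinner v (M *v w) = cinner (cadj M *v v) w"
  unfolding cinner_def cadj_def matrix_vector_mult_def
  by (simp add: sum_distrib_left sum_distrib_right mult_ac) (rule sum.swap)

lemma continuous_on_cinner [continuous_intros]:
  "continuous_on S a \<Longrightarrow> continuous_on S b \<Longrightarrow> continuous_on S (\<lambda>x. cinner (a x) (b x))"
  unfolding cinner_def by (intro continuous_intros)

lemma matrix_vector_mult_scale: "(M::complex^'n^'m) *v (c *s v) = c *s (M *v v)"
  unfolding matrix_vector_mult_def vector_scalar_mult_def vec_eq_iff
  by (simp add: sum_distrib_left mult.left_commute[of c])

lemma matrix_vector_mult_scaleR_complex: "(M::complex^'n^'m) *v (c *\<^sub>R v) = c *\<^sub>R (M *v v)"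
  unfolding matrix_vector_mult_def vec_eq_iff
  by (simp add: scaleR_sum_right mult_scaleR_right)

lemma continuous_on_matrix_vector_mult [continuous_intros]:
  fixes M :: "complex^'n^'m"
  shows "continuous_on S b \<Longrightarrow> continuous_on S (\<lambda>x. M *v b x)"
  unfolding matrix_vector_mult_def by (intro continuous_intros)

section \<open>Hermitian matrices and the spectral theorem\<close>

definition hermitian :: "complex^'n^'n \<Rightarrow> bool" where
  "hermitian H \<longleftrightarrow> (\<forall>u w. cinner u (H *v w) = cinner (H *v u) w)"

lemma psd_hermitian:
  assumes "psd M"
  shows "hermitian M"
  unfolding hermitian_def
proof (intro allI)
  fix u w
  define Q where "Q v = cinner v (M *v v)" for v
  have real: "Im (Q v) = 0" for v
    using assms unfolding psd_def Q_def by (meson complex_is_Real_iff)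
  define a where "a = cinner u (M *v w)"
  define b where "b = cinner w (M *v u)"
  have polarization: "Q (u + c *s w) = Q u + c * a + cnj c * b + c * cnj c * Q w" for c
    unfolding Q_def a_def b_def
    by (simp add: matrix_vector_right_distrib matrix_vector_mult_scale cinner_add_left
        cinner_add_right cinner_scale_left cinner_scale_right algebra_simps)
  have "Im a + Im b = 0"
    using real[of "u + 1 *s w"] real[of u] real[of w] by (simp only: polarization) simp
  moreover have "Re a - Re b = 0"
    using real[of "u + \<i> *s w"] real[of u] real[of w] by (simp only: polarization) simp
  ultimately have "a = cnj b" by (simp add: complex_eq_iff)
  then show "cinner u (M *v w) = cinner (M *v u) w"
    unfolding a_def b_def by (metis cinner_commute)
qed

lemma hermitian_quadratic_form_real:
  assumes "hermitian H"
  shows "cinner v (H *v v) = of_real (Re (cinner v (H *v v)))"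
  using assms unfolding hermitian_def
  by (metis Reals_cnj_iff cinner_commute complex_is_Real_iff of_real_Re)

lemma nonneg_zero_if_linear_le_quadratic:
  fixes a c :: real
  assumes "0 \<le> a" and le: "\<And>t. 0 < t \<Longrightarrow> 2 * t * a \<le> t\<^sup>2 * c"
  shows "a = 0"
proof (rule ccontr)
  assume "a \<noteq> 0"
  with assms have a: "a > 0" by simp
  define t where "t = a / (\<bar>c\<bar> + 1)"
  have t: "t > 0" using a by (simp add: t_def)
  have "2 * a \<le> t * c" using le[OF t] t by (simp add: power2_eq_square)
  also have "\<dots> \<le> t * \<bar>c\<bar>" using t by (simp add: mult_left_mono)
  also have "\<dots> = a * (\<bar>c\<bar> / (\<bar>c\<bar> + 1))" by (simp add: t_def)
  also have "\<dots> < a * 1" using a by (intro mult_strict_left_mono) auto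
  finally show False using a by simp
qed

lemma quadratic_form_le_max_on_subspace:
  fixes H :: "complex^'n^'n"
  assumes W: "subspace W" and y: "y \<in> W"
    and max: "\<And>x. x \<in> W \<Longrightarrow> norm x = 1 \<Longrightarrow> Re (cinner x (H *v x)) \<le> \<mu>"
  shows "Re (cinner y (H *v y)) \<le> \<mu> * (norm y)\<^sup>2"
proof (cases "y = 0")
  case False
  define s where "s = norm y"
  have s: "s > 0" using False by (simp add: s_def)
  have "Re (cinner ((1 / s) *\<^sub>R y) (H *v ((1 / s) *\<^sub>R y))) \<le> \<mu>"
    using s by (intro max subspace_scale[OF W y]) (simp add: s_def)
  then have "Re (cinner y (H *v y)) / s\<^sup>2 \<le> \<mu>"
    by (simp add: matrix_vector_mult_scaleR_complex cinner_scaleR_left cinner_scaleR_right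
        power2_eq_square)
  then show ?thesis using s by (simp add: s_def divide_le_eq mult.commute)
qed simp

text \<open>Perturbing \<open>v\<close> along \<open>z = H v - \<mu> v\<close> would raise the quadratic form to first order in the
  perturbation, but the normalisation only to second order; hence \<open>z = 0\<close>.\<close>
lemma rayleigh_maximiser_eigenvector:
  fixes H :: "complex^'n^'n"
  assumes H: "hermitian H" and W: "subspace W" and inv: "\<And>x. x \<in> W \<Longrightarrow> H *v x \<in> W"
    and v: "v \<in> W" "norm v = 1"
    and max: "\<And>y. y \<in> W \<Longrightarrow> norm y = 1 \<Longrightarrow> Re (cinner y (H *v y)) \<le> Re (cinner v (H *v v))"
  shows "H *v v = Re (cinner v (H *v v)) *\<^sub>R v"
proof -
  define \<mu> where "\<mu> = Re (cinner v (H *v v))"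
  define z where "z = H *v v - \<mu> *\<^sub>R v"
  define nz where "nz = (norm z)\<^sup>2"
  have cvv: "cinner v v = 1" using v by (simp add: cinner_self)
  have cvHv: "cinner v (H *v v) = of_real \<mu>"
    unfolding \<mu>_def by (rule hermitian_quadratic_form_real[OF H])
  have cvz: "cinner v z = 0"
    by (simp add: z_def cinner_diff_right cinner_scaleR_right cvHv cvv)
  then have czv: "cinner z v = 0" by (metis cinner_commute complex_cnj_zero)
  have Hv: "H *v v = z + \<mu> *\<^sub>R v" by (simp add: z_def)
  have czz: "cinner z z = of_real nz" by (simp add: nz_def cinner_self)
  have czHv: "cinner z (H *v v) = of_real nz"
    by (simp add: Hv cinner_add_right cinner_scaleR_right czv czz)
  have cvHz: "cinner v (H *v z) = of_real nz"
    using H by (simp add: hermitian_def Hv cinner_add_left cinner_scaleR_left cvz czz)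
  have "2 * t * nz \<le> t\<^sup>2 * (\<mu> * nz - Re (cinner z (H *v z)))" if t: "t > 0" for t
  proof -
    define y where "y = v + t *\<^sub>R z"
    have "y \<in> W"
      unfolding y_def z_def by (intro subspace_add subspace_scale subspace_diff W v inv)
    then have "Re (cinner y (H *v y)) \<le> \<mu> * (norm y)\<^sup>2"
      using W max by (intro quadratic_form_le_max_on_subspace) (auto simp: \<mu>_def)
    moreover have "cinner y y = of_real (1 + t\<^sup>2 * nz)"
      unfolding y_def by (simp add: cinner_add_left cinner_add_right cinner_scaleR_left
          cinner_scaleR_right cvv cvz czv czz power2_eq_square)
    then have "(norm y)\<^sup>2 = 1 + t\<^sup>2 * nz" by (metis cinner_self of_real_eq_iff)
    moreover have "cinner y (H *v y) = cinner v (H *v v) + of_real t * cinner v (H *v z)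
        + of_real t * cinner z (H *v v) + of_real t * of_real t * cinner z (H *v z)"
      unfolding y_def by (simp add: matrix_vector_right_distrib matrix_vector_mult_scaleR_complex
          cinner_add_left cinner_add_right cinner_scaleR_left cinner_scaleR_right algebra_simps)
    then have "Re (cinner y (H *v y)) = \<mu> + 2 * t * nz + t\<^sup>2 * Re (cinner z (H *v z))"
      by (simp add: cvHv cvHz czHv power2_eq_square)
    ultimately show ?thesis by (simp add: algebra_simps)
  qed
  then have "nz = 0" by (intro nonneg_zero_if_linear_le_quadratic) (simp_all add: nz_def)
  then show ?thesis using Hv by (simp add: nz_def \<mu>_def)
qed

lemma hermitian_eigenvector_in_invariant_subspace:
  fixes H :: "complex^'n^'n"
  assumes H: "hermitian H" and W: "subspace W" and inv: "\<And>x. x \<in> W \<Longrightarrow> H *v x \<in> W"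
    and w: "w \<in> W" "w \<noteq> 0"
  obtains v and \<mu> :: real where "v \<in> W" "norm v = 1" "H *v v = \<mu> *\<^sub>R v"
proof -
  define K where "K = W \<inter> sphere 0 1"
  have "compact K"
    unfolding K_def using closed_subspace[OF W] by (intro closed_Int_compact) auto
  moreover have "(1 / norm w) *\<^sub>R w \<in> K"
    unfolding K_def using w subspace_scale[OF W] by auto
  then have "K \<noteq> {}" by auto
  moreover have "continuous_on K (\<lambda>y. Re (cinner y (H *v y)))"
    by (intro continuous_intros)
  ultimately have "\<exists>v\<in>K. \<forall>y\<in>K. Re (cinner y (H *v y)) \<le> Re (cinner v (H *v v))"
    by (rule continuous_attains_sup)
  then obtain v where v: "v \<in> K"
    and max: "\<And>y. y \<in> K \<Longrightarrow> Re (cinner y (H *v y)) \<le> Re (cinner v (H *v v))"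
    by blast
  have "v \<in> W" "norm v = 1" using v by (auto simp: K_def)
  moreover have "H *v v = Re (cinner v (H *v v)) *\<^sub>R v"
    using max \<open>v \<in> W\<close> \<open>norm v = 1\<close>
    by (intro rayleigh_maximiser_eigenvector[OF H W inv]) (auto simp: K_def)
  ultimately show ?thesis by (rule that)
qed

definition orthonormal_set :: "(complex^'n) set \<Rightarrow> bool" where
  "orthonormal_set F \<longleftrightarrow> (\<forall>f\<in>F. \<forall>g\<in>F. cinner f g = (if f = g then 1 else 0))"

lemma subspace_orthogonal_complement: "subspace {v. \<forall>f\<in>F. cinner f v = 0}"
  unfolding subspace_def by (simp add: cinner_add_right cinner_scaleR_right)

lemma orthogonal_complement_of_eigenvectors_invariant:
  assumes H: "hermitian H" and eig: "\<forall>f\<in>F. \<exists>\<mu>::real. H *v f = \<mu> *\<^sub>R f"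
    and v: "\<forall>f\<in>F. cinner f v = 0"
  shows "\<forall>f\<in>F. cinner f (H *v v) = 0"
proof
  fix f assume "f \<in> F"
  then obtain \<mu> :: real where "H *v f = \<mu> *\<^sub>R f" using eig by blast
  then have "cinner f (H *v v) = of_real \<mu> * cinner f v"
    using H by (simp add: hermitian_def cinner_scaleR_left)
  then show "cinner f (H *v v) = 0" using v \<open>f \<in> F\<close> by simp
qed

lemma orthonormal_set_orthogonal_projection:
  assumes "finite F" "orthonormal_set F"
  shows "\<forall>g\<in>F. cinner g (x - (\<Sum>f\<in>F. cinner f x *s f)) = 0"
proof
  fix g assume g: "g \<in> F"
  have "cinner g (\<Sum>f\<in>F. cinner f x *s f) = (\<Sum>f\<in>F. cinner f x * cinner g f)"
    using assms by (simp add: cinner_sum_right cinner_scale_right)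
  also have "\<dots> = (\<Sum>f\<in>F. if f = g then cinner g x else 0)"
    using assms g by (intro sum.cong refl) (auto simp: orthonormal_set_def)
  also have "\<dots> = cinner g x" using assms g by simp
  finally show "cinner g (x - (\<Sum>f\<in>F. cinner f x *s f)) = 0" by (simp add: cinner_diff_right)
qed

lemma orthogonal_complement_nontrivial:
  fixes F :: "(complex^'n) set"
  assumes fin: "finite F" and on: "orthonormal_set F" and card: "card F < CARD('n)"
  obtains w where "w \<noteq> 0" "\<forall>f\<in>F. cinner f w = 0"
proof -
  have "\<not> UNIV \<subseteq> vec.span F"
  proof
    assume "UNIV \<subseteq> vec.span F"
    then have "vec.dim (UNIV :: (complex^'n) set) \<le> card F" using fin by (rule vec.dim_le_card)
    then show False using card vec_dim_card[where 'a=complex and 'n='n] by linarith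
  qed
  then obtain x where x: "x \<notin> vec.span F" by blast
  define w where "w = x - (\<Sum>f\<in>F. cinner f x *s f)"
  have "w \<noteq> 0"
  proof
    assume "w = 0"
    then have "x = (\<Sum>f\<in>F. cinner f x *s f)" by (simp add: w_def)
    also have "\<dots> \<in> vec.span F" by (intro vec.span_sum vec.span_scale vec.span_base)
    finally show False using x by simp
  qed
  moreover have "\<forall>f\<in>F. cinner f w = 0"
    unfolding w_def by (rule orthonormal_set_orthogonal_projection[OF fin on])
  ultimately show ?thesis by (rule that)
qed

lemma hermitian_orthonormal_eigenvectors:
  fixes H :: "complex^'n^'n"
  assumes H: "hermitian H" and k: "k \<le> CARD('n)"
  shows "\<exists>F. finite F \<and> card F = k \<and> orthonormal_set F \<and> (\<forall>f\<in>F. \<exists>\<mu>::real. H *v f = \<mu> *\<^sub>R f)"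
  using k
proof (induction k)
  case 0
  then show ?case by (intro exI[of _ "{}"]) (auto simp: orthonormal_set_def)
next
  case (Suc k)
  then obtain F where fin: "finite F" and card: "card F = k" and on: "orthonormal_set F"
    and eig: "\<forall>f\<in>F. \<exists>\<mu>::real. H *v f = \<mu> *\<^sub>R f" by auto
  define W where "W = {v. \<forall>f\<in>F. cinner f v = 0}"
  have inv: "\<And>y. y \<in> W \<Longrightarrow> H *v y \<in> W"
    using orthogonal_complement_of_eigenvectors_invariant[OF H eig] by (simp add: W_def)
  obtain w where "w \<noteq> 0" "w \<in> W"
    using orthogonal_complement_nontrivial[OF fin on] card Suc.prems by (auto simp: W_def)
  then obtain v and \<mu> :: real where v: "v \<in> W" "norm v = 1" "H *v v = \<mu> *\<^sub>R v"
    using hermitian_eigenvector_in_invariant_subspace[OF H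
        subspace_orthogonal_complement[of F, folded W_def] inv]
    by blast
  have cvv: "cinner v v = 1" using v by (simp add: cinner_self)
  have orth: "cinner f v = 0" "cinner v f = 0" if "f \<in> F" for f
    using v that cinner_commute[of v f] unfolding W_def by auto
  then have "v \<notin> F" using cvv by force
  with on cvv orth have "orthonormal_set (insert v F)"
    unfolding orthonormal_set_def by auto
  then show ?case using fin card \<open>v \<notin> F\<close> eig v
    by (intro exI[of _ "insert v F"]) auto
qed

section \<open>Functional calculus and continuity of the entropy\<close>

lemma matrix_add_rdistrib: "(B + C) ** (A::'a::semiring_1^'n^'m) = B ** A + C ** A"
  by (simp add: matrix_matrix_mult_def vec_eq_iff sum.distrib distrib_right)

lemma matrix_diff_ldistrib: "(A::complex^'n^'m) ** (B - C) = A ** B - A ** C"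
  by (simp add: matrix_matrix_mult_def vec_eq_iff sum_subtractf right_diff_distrib)

lemma continuous_on_matrix_mult [continuous_intros]:
  fixes f :: "'z::topological_space \<Rightarrow> complex^'n^'m" and g :: "'z \<Rightarrow> complex^'k^'n"
  shows "continuous_on S f \<Longrightarrow> continuous_on S g \<Longrightarrow> continuous_on S (\<lambda>x. f x ** g x)"
  unfolding matrix_matrix_mult_def by (intro continuous_intros continuous_on_vec_lambda)

lemma continuous_on_Re_trace [continuous_intros]:
  fixes f :: "'z::topological_space \<Rightarrow> complex^'n^'n"
  shows "continuous_on S f \<Longrightarrow> continuous_on S (\<lambda>x. Re (trace (f x)))"
  unfolding trace_def by (intro continuous_intros)

lemma diag_mat_mult: "diag_mat a ** diag_mat b = diag_mat (\<lambda>i. a i * b i)"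
proof -
  have "diag_mat a $ i $ k * diag_mat b $ k $ j =
      (if k = i then (if i = j then of_real (a i * b i) else 0) else 0)" for i j k
    by (simp add: diag_mat_def)
  then show ?thesis by (simp add: matrix_matrix_mult_def vec_eq_iff diag_mat_def)
qed

lemma diag_mat_add: "diag_mat a + diag_mat b = diag_mat (\<lambda>i. a i + b i)"
  by (simp add: diag_mat_def vec_eq_iff)

lemma diag_mat_scaleR: "c *\<^sub>R diag_mat a = diag_mat (\<lambda>i. c * a i)"
  unfolding scaleR_vec_def by (simp add: diag_mat_def vec_eq_iff scaleR_conv_of_real)

lemma diag_mat_const: "diag_mat (\<lambda>i. c) = c *\<^sub>R mat 1"
  unfolding scaleR_vec_def by (simp add: diag_mat_def vec_eq_iff mat_def scaleR_conv_of_real)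

lemma trace_diag_mat: "trace (diag_mat a) = of_real (\<Sum>i\<in>UNIV. a i)"
  by (simp add: trace_def diag_mat_def)

lemma unitary_conj_mult:
  assumes "unitary_mat U"
  shows "(U ** A ** cadj U) ** (U ** B ** cadj U) = U ** (A ** B) ** cadj U"
proof -
  have "(U ** A ** cadj U) ** (U ** B ** cadj U) = U ** A ** (cadj U ** U) ** B ** cadj U"
    by (simp add: matrix_mul_assoc)
  also have "\<dots> = U ** A ** B ** cadj U" using assms by (simp add: unitary_mat_def)
  finally show ?thesis by (simp add: matrix_mul_assoc)
qed

lemma unitary_conj_trace:
  assumes "unitary_mat U"
  shows "trace (U ** A ** cadj U) = trace A"
proof -
  have "trace (U ** A ** cadj U) = trace (cadj U ** (U ** A))" by (rule trace_mul_sym)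
  also have "\<dots> = trace A" using assms by (simp add: unitary_mat_def matrix_mul_assoc)
  finally show ?thesis .
qed

lemma hermitian_spectral_decomposition:
  fixes H :: "complex^'n^'n"
  assumes H: "hermitian H"
  obtains U l where "unitary_mat U" "H = U ** diag_mat l ** cadj U"
proof -
  obtain F where fin: "finite F" and card: "card F = CARD('n)" and on: "orthonormal_set F"
    and eig: "\<forall>f\<in>F. \<exists>\<mu>::real. H *v f = \<mu> *\<^sub>R f"
    using hermitian_orthonormal_eigenvectors[OF H order.refl] by blast
  obtain h where h: "bij_betw h (UNIV :: 'n set) F"
    using finite_same_card_bij[of "UNIV :: 'n set" F] fin card by auto
  have hF: "h i \<in> F" for i using h by (auto simp: bij_betw_def)
  have h_eq_iff: "h i = h j \<longleftrightarrow> i = j" for i j using h by (auto simp: bij_betw_def inj_on_def)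
  define l where "l i = (SOME \<mu>. H *v h i = \<mu> *\<^sub>R h i)" for i
  have Hh: "H *v h i = l i *\<^sub>R h i" for i
    unfolding l_def by (rule someI_ex) (use eig hF in blast)
  define U :: "complex^'n^'n" where "U = (\<chi> r i. h i $ r)"
  have "(cadj U ** U) $ i $ j = cinner (h i) (h j)" for i j
    by (simp add: U_def cadj_def matrix_matrix_mult_def cinner_def)
  also have "cinner (h i) (h j) = (if i = j then 1 else 0)" for i j
    using on hF h_eq_iff by (simp add: orthonormal_set_def)
  finally have UU: "cadj U ** U = mat 1" by (simp add: vec_eq_iff mat_def)
  then have UU': "U ** cadj U = mat 1" by (simp add: matrix_left_right_inverse)
  have "(H ** U) $ r $ i = (U ** diag_mat l) $ r $ i" for r i
  proof -
    have "U $ r $ s * diag_mat l $ s $ i = (if s = i then h i $ r * of_real (l i) else 0)" for s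
      by (simp add: U_def diag_mat_def)
    then have "(U ** diag_mat l) $ r $ i = h i $ r * of_real (l i)"
      by (simp add: matrix_matrix_mult_def)
    moreover have "(H ** U) $ r $ i = (H *v h i) $ r"
      by (simp add: U_def matrix_matrix_mult_def matrix_vector_mult_def)
    ultimately show ?thesis
      unfolding Hh scaleR_vec_def by (simp add: scaleR_conv_of_real mult.commute)
  qed
  then have HU: "H ** U = U ** diag_mat l" by (simp add: vec_eq_iff)
  have "H = (H ** U) ** cadj U" by (simp add: UU' flip: matrix_mul_assoc)
  also have "\<dots> = U ** diag_mat l ** cadj U" by (simp add: HU)
  finally show ?thesis using UU UU' that unfolding unitary_mat_def by blast
qed

definition extends_spectrally :: "(complex^'n^'n \<Rightarrow> complex^'n^'n) \<Rightarrow> (real \<Rightarrow> real) \<Rightarrow> bool" where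
  "extends_spectrally Q q \<longleftrightarrow>
     (\<forall>U l. unitary_mat U \<longrightarrow> Q (U ** diag_mat l ** cadj U) = U ** diag_mat (q \<circ> l) ** cadj U)"

lemma real_polynomial_function_continuous_spectral_extension:
  assumes "real_polynomial_function q"
  shows "\<exists>Q :: complex^'n^'n \<Rightarrow> complex^'n^'n. continuous_on UNIV Q \<and> extends_spectrally Q q"
  using assms
proof (induction rule: real_polynomial_function.induct)
  case (linear f)
  have "f x = f 1 * x" for x
    using linear_scale_real[OF bounded_linear.linear[OF linear], of x 1] by simp
  then have "f \<circ> l = (\<lambda>i. f 1 * l i)" for l :: "'n \<Rightarrow> real"
    unfolding o_def by (rule ext)
  then have diag: "diag_mat (f \<circ> l) = f 1 *\<^sub>R diag_mat l" for l :: "'n \<Rightarrow> real"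
    by (simp add: diag_mat_scaleR)
  have "extends_spectrally (\<lambda>X :: complex^'n^'n. f 1 *\<^sub>R X) f"
    unfolding extends_spectrally_def by (simp add: diag scalar_matrix_assoc matrix_scalar_ac)
  then show ?case by (intro exI[of _ "\<lambda>X. f 1 *\<^sub>R X"]) (auto intro: continuous_intros)
next
  case (const c)
  have "extends_spectrally (\<lambda>X :: complex^'n^'n. c *\<^sub>R mat 1) (\<lambda>x. c)"
    by (simp add: extends_spectrally_def o_def diag_mat_const matrix_scalar_ac unitary_mat_def
        flip: scalar_matrix_assoc)
  then show ?case by (intro exI[of _ "\<lambda>X. c *\<^sub>R mat 1"]) (auto intro: continuous_intros)
next
  case (add f g)
  then obtain F G :: "complex^'n^'n \<Rightarrow> complex^'n^'n"
    where F: "continuous_on UNIV F" "extends_spectrally F f"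
      and G: "continuous_on UNIV G" "extends_spectrally G g" by blast
  have "diag_mat ((\<lambda>x. f x + g x) \<circ> l) = diag_mat (f \<circ> l) + diag_mat (g \<circ> l)" for l :: "'n \<Rightarrow> real"
    by (simp add: diag_mat_add o_def)
  then have "extends_spectrally (\<lambda>X. F X + G X) (\<lambda>x. f x + g x)"
    using F G by (simp add: extends_spectrally_def matrix_add_ldistrib matrix_add_rdistrib)
  with F G show ?case by (intro exI[of _ "\<lambda>X. F X + G X"]) (auto intro: continuous_intros)
next
  case (mult f g)
  then obtain F G :: "complex^'n^'n \<Rightarrow> complex^'n^'n"
    where F: "continuous_on UNIV F" "extends_spectrally F f"
      and G: "continuous_on UNIV G" "extends_spectrally G g" by blast
  have "diag_mat ((\<lambda>x. f x * g x) \<circ> l) = diag_mat (f \<circ> l) ** diag_mat (g \<circ> l)" for l :: "'n \<Rightarrow> real"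
    by (simp add: diag_mat_mult o_def)
  then have "extends_spectrally (\<lambda>X. F X ** G X) (\<lambda>x. f x * g x)"
    using F G by (simp add: extends_spectrally_def unitary_conj_mult)
  with F G show ?case by (intro exI[of _ "\<lambda>X. F X ** G X"]) (auto intro: continuous_intros)
qed

text \<open>\<open>mat_fun\<close> is defined through a spectral decomposition chosen by \<open>SOME\<close>; this exhibits the
  chosen one, which need not be a decomposition fixed in advance.\<close>
lemma mat_fun_spectral:
  fixes M :: "complex^'n^'n"
  assumes "hermitian M"
  obtains U l where "unitary_mat U" "M = U ** diag_mat l ** cadj U"
    "mat_fun f M = U ** diag_mat (f \<circ> l) ** cadj U"
proof -
  obtain U l where "unitary_mat U" "M = U ** diag_mat l ** cadj U"
    using hermitian_spectral_decomposition[OF assms] by blast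
  then have "\<exists>B U l. unitary_mat U \<and> M = U ** diag_mat l ** cadj U \<and>
      B = U ** diag_mat (f \<circ> l) ** cadj U"
    by blast
  from someI_ex[OF this] obtain U' l' where "unitary_mat U'" "M = U' ** diag_mat l' ** cadj U'"
    "mat_fun f M = U' ** diag_mat (f \<circ> l') ** cadj U'"
    unfolding mat_fun_def by blast
  then show ?thesis by (rule that)
qed

lemma cadj_mult_mult_diag_entry:
  "(cadj U ** A ** U) $ i $ i = cinner (column i U) (A *v column i U)"
proof -
  have "(cadj U ** A ** U) $ i $ i = (\<Sum>k\<in>UNIV. (\<Sum>j\<in>UNIV. cnj (U$j$i) * A$j$k) * U$k$i)"
    by (simp add: matrix_matrix_mult_def cadj_def)
  also have "\<dots> = (\<Sum>k\<in>UNIV. \<Sum>j\<in>UNIV. cnj (U$j$i) * A$j$k * U$k$i)"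
    by (simp add: sum_distrib_right)
  also have "\<dots> = (\<Sum>j\<in>UNIV. \<Sum>k\<in>UNIV. cnj (U$j$i) * A$j$k * U$k$i)"
    by (rule sum.swap)
  also have "\<dots> = cinner (column i U) (A *v column i U)"
    by (simp add: cinner_def matrix_vector_mult_def column_def sum_distrib_left mult.assoc)
  finally show ?thesis .
qed

lemma psd_eigenvalue_nonneg:
  assumes "psd M" "unitary_mat U" "M = U ** diag_mat l ** cadj U"
  shows "l i \<ge> 0"
proof -
  have "cadj U ** M ** U = (cadj U ** U) ** diag_mat l ** (cadj U ** U)"
    by (simp add: assms(3) matrix_mul_assoc)
  then have diag: "diag_mat l = cadj U ** M ** U"
    using assms(2) by (simp add: unitary_mat_def)
  have "complex_of_real (l i) = diag_mat l $ i $ i" by (simp add: diag_mat_def)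
  also have "\<dots> = cinner (column i U) (M *v column i U)"
    unfolding diag by (rule cadj_mult_mult_diag_entry)
  finally have "l i = Re (cinner (column i U) (M *v column i U))"
    by (metis Re_complex_of_real)
  then show ?thesis using assms(1) unfolding psd_def by simp
qed

lemma density_eigenvalue_le_1:
  assumes "density M" "unitary_mat U" "M = U ** diag_mat l ** cadj U"
  shows "l i \<in> {0..1}"
proof -
  have nonneg: "l j \<ge> 0" for j using assms psd_eigenvalue_nonneg density_def by blast
  have "of_real (\<Sum>j\<in>UNIV. l j) = (1::complex)"
    using assms by (simp add: density_def unitary_conj_trace trace_diag_mat)
  then have "(\<Sum>j\<in>UNIV. l j) = 1" by (simp only: of_real_eq_1_iff)
  moreover have "l i \<le> (\<Sum>j\<in>UNIV. l j)" using nonneg by (intro member_le_sum) auto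
  ultimately show ?thesis using nonneg by auto
qed

definition xlogx :: "real \<Rightarrow> real" where
  "xlogx x = x * (if x > 0 then ln x else 0)"

lemma continuous_on_xlogx: "continuous_on {0..} xlogx"
proof -
  have "continuous (at x within {0..}) (\<lambda>x. x * ln x)" if "x \<ge> 0" for x :: real
  proof (cases "x = 0")
    case True
    have "((\<lambda>x::real. x * ln x) \<longlongrightarrow> 0) (at_right 0)" by real_asymp
    then show ?thesis using True by (simp add: continuous_within at_within_Ici_at_right)
  next
    case False
    with that have "isCont (\<lambda>x. x * ln x) x" by (intro continuous_intros) auto
    then show ?thesis by (rule continuous_at_imp_continuous_at_within)
  qed
  then have "continuous_on {0..} (\<lambda>x::real. x * ln x)"
    by (simp add: continuous_on_eq_continuous_within)
  then show ?thesis by (rule continuous_on_cong[THEN iffD1, rotated 2]) (auto simp: xlogx_def)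
qed

definition neg_entropy :: "complex^'n^'n \<Rightarrow> real" where
  "neg_entropy M = Re (trace (M ** mat_log M))"

lemma neg_entropy_spectral:
  assumes "hermitian M"
  obtains U l where "unitary_mat U" "M = U ** diag_mat l ** cadj U"
    "neg_entropy M = (\<Sum>i\<in>UNIV. xlogx (l i))"
proof -
  obtain U l where U: "unitary_mat U" and M: "M = U ** diag_mat l ** cadj U"
    and L: "mat_log M = U ** diag_mat ((\<lambda>x. if x > 0 then ln x else 0) \<circ> l) ** cadj U"
    using mat_fun_spectral[OF assms] unfolding mat_log_def by blast
  have "M ** mat_log M = U ** diag_mat (\<lambda>i. xlogx (l i)) ** cadj U"
    unfolding L by (subst M) (simp add: unitary_conj_mult[OF U] diag_mat_mult xlogx_def o_def)
  then have "neg_entropy M = (\<Sum>i\<in>UNIV. xlogx (l i))"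
    by (simp add: neg_entropy_def unitary_conj_trace[OF U] trace_diag_mat)
  with U M show ?thesis by (rule that)
qed

lemma continuous_on_uniform_approximation:
  fixes f :: "'a::topological_space \<Rightarrow> real"
  assumes "\<And>e. e > 0 \<Longrightarrow> \<exists>\<phi>. continuous_on S \<phi> \<and> (\<forall>x\<in>S. \<bar>f x - \<phi> x\<bar> < e)"
  shows "continuous_on S f"
proof -
  have "\<exists>\<phi>. continuous_on S \<phi> \<and> (\<forall>x\<in>S. \<bar>f x - \<phi> x\<bar> < 1 / Suc n)" for n
    by (rule assms) simp
  then obtain \<phi> where cont: "\<And>n. continuous_on S (\<phi> n)"
    and approx: "\<And>n x. x \<in> S \<Longrightarrow> \<bar>f x - \<phi> n x\<bar> < 1 / Suc n"
    by metis
  have "uniform_limit S \<phi> f sequentially"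
    unfolding uniform_limit_sequentially_iff
  proof (intro allI impI)
    fix e :: real assume "e > 0"
    then obtain N where N: "1 / Suc N < e" using nat_approx_posE by blast
    have "dist (\<phi> n x) (f x) < e" if "n \<ge> N" "x \<in> S" for n x
    proof -
      have "1 / real (Suc n) \<le> 1 / Suc N" using that by (intro divide_left_mono) auto
      then show ?thesis using approx[OF \<open>x \<in> S\<close>, of n] N unfolding dist_real_def by linarith
    qed
    then show "\<exists>N. \<forall>n\<ge>N. \<forall>x\<in>S. dist (\<phi> n x) (f x) < e" by blast
  qed
  with cont show ?thesis by (intro uniform_limit_theorem[of _ _ sequentially]) auto
qed

lemma continuous_on_neg_entropy: "continuous_on {M :: complex^'n^'n. density M} neg_entropy"
proof (rule continuous_on_uniform_approximation)
  fix e :: real assume e: "e > 0"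
  define e' where "e' = e / (2 * real CARD('n))"
  have e': "e' > 0" using e by (simp add: e'_def)
  have xlogx: "continuous_on {0..1} xlogx"
    by (rule continuous_on_subset[OF continuous_on_xlogx]) auto
  obtain q where q: "real_polynomial_function q"
    and approx: "\<And>x. x \<in> {0..1} \<Longrightarrow> \<bar>xlogx x - q x\<bar> < e'"
    using Stone_Weierstrass_real_polynomial_function[OF compact_Icc xlogx e'] by blast
  obtain Q :: "complex^'n^'n \<Rightarrow> complex^'n^'n"
    where Q: "continuous_on UNIV Q" and QU: "extends_spectrally Q q"
    using real_polynomial_function_continuous_spectral_extension[OF q] by blast
  show "\<exists>\<phi>. continuous_on {M :: complex^'n^'n. density M} \<phi> \<and>
      (\<forall>M\<in>{M. density M}. \<bar>neg_entropy M - \<phi> M\<bar> < e)"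
  proof (intro exI conjI ballI)
    show "continuous_on {M. density M} (\<lambda>M. Re (trace (Q M)))"
      by (intro continuous_on_Re_trace continuous_on_subset[OF Q]) simp
    fix M :: "complex^'n^'n" assume "M \<in> {M. density M}"
    then have M: "density M" by simp
    have "hermitian M" using M by (simp add: density_def psd_hermitian)
    then obtain U l where U: "unitary_mat U" and Md: "M = U ** diag_mat l ** cadj U"
      and E: "neg_entropy M = (\<Sum>i\<in>UNIV. xlogx (l i))" by (rule neg_entropy_spectral)
    have bound: "\<bar>xlogx (l i) - q (l i)\<bar> \<le> e'" for i
      using approx[OF density_eigenvalue_le_1[OF M U Md]] by (rule less_imp_le)
    have "Re (trace (Q M)) = (\<Sum>i\<in>UNIV. q (l i))"
      using QU U Md by (simp add: extends_spectrally_def unitary_conj_trace trace_diag_mat)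
    then have "\<bar>neg_entropy M - Re (trace (Q M))\<bar> = \<bar>\<Sum>i\<in>UNIV. xlogx (l i) - q (l i)\<bar>"
      by (simp add: E sum_subtractf)
    also have "\<dots> \<le> (\<Sum>i\<in>UNIV. \<bar>xlogx (l i) - q (l i)\<bar>)" by (rule sum_abs)
    also have "\<dots> \<le> (\<Sum>i\<in>(UNIV::'n set). e')" using bound by (rule sum_mono)
    also have "\<dots> < e" using e by (simp add: e'_def)
    finally show "\<bar>neg_entropy M - Re (trace (Q M))\<bar> < e" .
  qed
qed

section \<open>Quantum channels\<close>

lemma matrix_vector_mult_sum_left:
  "finite A \<Longrightarrow> (\<Sum>k\<in>A. F k) *v (v::complex^'n) = (\<Sum>k\<in>A. F k *v v)"
  by (induct A rule: finite_induct) (auto simp: matrix_vector_mult_add_rdistrib)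

lemma matrix_mult_sum_left:
  "finite A \<Longrightarrow> (\<Sum>k\<in>A. F k) ** (X::complex^'n^'m) = (\<Sum>k\<in>A. F k ** X)"
  by (induct A rule: finite_induct) (auto simp: matrix_add_rdistrib)

lemma trace_sum: "finite A \<Longrightarrow> trace (\<Sum>k\<in>A. F k) = (\<Sum>k\<in>A. trace (F k :: complex^'n^'n))"
  by (induct A rule: finite_induct) (auto simp: trace_add trace_0[simplified])

lemma tpcpE:
  fixes N :: "complex^'a^'a \<Rightarrow> complex^'b^'b"
  assumes "tpcp N"
  obtains m :: nat and K where "N = (\<lambda>X. \<Sum>k<m. K k ** X ** cadj (K k))"
    "(\<Sum>k<m. cadj (K k) ** K k) = mat 1"
  using assms unfolding tpcp_def by blast

lemma cinner_kraus: "cinner v ((K ** X ** cadj K) *v v) = cinner (cadj K *v v) (X *v (cadj K *v v))"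
proof -
  have "(K ** X ** cadj K) *v v = K *v (X *v (cadj K *v v))"
    by (simp add: matrix_vector_mul_assoc matrix_mul_assoc)
  then show ?thesis by (simp only: cinner_adj)
qed

lemma tpcp_psd:
  assumes "tpcp N" "psd X"
  shows "psd (N X)"
  unfolding psd_def
proof
  fix v
  obtain K and m :: nat where N: "N = (\<lambda>X. \<Sum>k<m. K k ** X ** cadj (K k))"
    using assms(1) by (rule tpcpE)
  have "cinner v (N X *v v) = (\<Sum>k<m. cinner (cadj (K k) *v v) (X *v (cadj (K k) *v v)))"
    by (simp add: N matrix_vector_mult_sum_left cinner_sum_right cinner_kraus)
  moreover have "cinner (cadj (K k) *v v) (X *v (cadj (K k) *v v)) \<in> \<real> \<and>
      0 \<le> Re (cinner (cadj (K k) *v v) (X *v (cadj (K k) *v v)))" for k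
    using assms(2) by (simp add: psd_def)
  ultimately show "cinner v (N X *v v) \<in> \<real> \<and> 0 \<le> Re (cinner v (N X *v v))"
    by (auto intro: sum_in_Reals sum_nonneg simp: Re_sum)
qed

lemma tpcp_trace:
  assumes "tpcp N"
  shows "trace (N X) = trace X"
proof -
  obtain K and m :: nat where N: "N = (\<lambda>X. \<Sum>k<m. K k ** X ** cadj (K k))"
    and one: "(\<Sum>k<m. cadj (K k) ** K k) = mat 1"
    using assms by (rule tpcpE)
  have "trace (K k ** X ** cadj (K k)) = trace (cadj (K k) ** K k ** X)" for k
    using trace_mul_sym[of "K k ** X" "cadj (K k)"] by (simp add: matrix_mul_assoc)
  then have "trace (N X) = trace ((\<Sum>k<m. cadj (K k) ** K k) ** X)"
    by (simp add: N trace_sum matrix_mult_sum_left)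
  then show ?thesis by (simp add: one)
qed

lemma tpcp_density: "tpcp N \<Longrightarrow> density X \<Longrightarrow> density (N X)"
  using tpcp_psd tpcp_trace unfolding density_def by metis

lemma tpcp_continuous_on: "tpcp N \<Longrightarrow> continuous_on S N"
  by (erule tpcpE) (simp add: continuous_intros continuous_on_sum)

lemma psd_trace_mult_nonneg:
  assumes A: "psd A" and B: "psd B"
  shows "0 \<le> Re (trace (A ** B))"
proof -
  obtain U l where U: "unitary_mat U" and Ad: "A = U ** diag_mat l ** cadj U"
    using hermitian_spectral_decomposition[OF psd_hermitian[OF A]] by blast
  have "trace (A ** B) = trace ((cadj U ** B) ** (U ** diag_mat l))"
    unfolding Ad matrix_mul_assoc by (metis trace_mul_sym matrix_mul_assoc)
  also have "\<dots> = (\<Sum>i\<in>UNIV. (cadj U ** B ** U) $ i $ i * of_real (l i))"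
    unfolding trace_def matrix_mul_assoc
    by (intro sum.cong refl)
      (auto simp: matrix_matrix_mult_def diag_mat_def if_distrib cong: if_cong)
  finally have "Re (trace (A ** B)) = (\<Sum>i\<in>UNIV. Re (cinner (column i U) (B *v column i U)) * l i)"
    by (simp add: Re_sum cadj_mult_mult_diag_entry)
  also have "\<dots> \<ge> 0"
    using B psd_eigenvalue_nonneg[OF A U Ad] unfolding psd_def
    by (intro sum_nonneg mult_nonneg_nonneg) auto
  finally show ?thesis .
qed

lemma psd_quadratic_form_zero_imp_zero:
  assumes A: "psd A" and zero: "cinner v (A *v v) = 0"
  shows "A *v v = 0"
proof -
  define w where "w = A *v v"
  define nw where "nw = (norm w)\<^sup>2"
  have cww: "cinner w w = of_real nw" by (simp add: nw_def cinner_self)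
  have "cinner v (A *v w) = cinner (A *v v) w"
    using psd_hermitian[OF A] unfolding hermitian_def by blast
  then have cvAw: "cinner v (A *v w) = of_real nw" by (simp add: cww flip: w_def)
  have "2 * t * nw \<le> t\<^sup>2 * Re (cinner w (A *v w))" if "t > 0" for t
  proof -
    have "0 \<le> Re (cinner (v - t *\<^sub>R w) (A *v (v - t *\<^sub>R w)))"
      using A unfolding psd_def by blast
    also have "cinner (v - t *\<^sub>R w) (A *v (v - t *\<^sub>R w)) = cinner v (A *v v)
        - of_real t * cinner v (A *v w) - of_real t * cinner w (A *v v)
        + of_real t * of_real t * cinner w (A *v w)"
      by (simp add: matrix_vector_mult_diff_distrib matrix_vector_mult_scaleR_complex
          cinner_diff_right cinner_diff_left cinner_scaleR_left cinner_scaleR_right algebra_simps)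
    finally show ?thesis
      using zero by (simp add: cvAw cww power2_eq_square mult_ac flip: w_def)
  qed
  then have "nw = 0" by (intro nonneg_zero_if_linear_le_quadratic) (simp_all add: nw_def)
  then show ?thesis by (simp add: nw_def w_def)
qed

lemma hermitian_kernel_subset_if_supp_subset:
  assumes \<rho>: "hermitian \<rho>" and \<sigma>: "hermitian \<sigma>" and supp: "supp \<rho> \<subseteq> supp \<sigma>"
    and v: "\<sigma> *v v = 0"
  shows "\<rho> *v v = 0"
proof -
  obtain y where y: "\<rho> *v (\<rho> *v v) = \<sigma> *v y" using supp by (auto simp: supp_def)
  have "cinner (\<rho> *v v) (\<rho> *v v) = cinner v (\<sigma> *v y)"
    using \<rho> by (simp add: hermitian_def flip: y)
  also have "\<dots> = 0" using \<sigma> v by (simp add: hermitian_def)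
  finally show ?thesis by (simp add: cinner_self)
qed

lemma diag_mat_matrix_vector_mult: "diag_mat a *v c = (\<chi> i. of_real (a i) * c $ i)"
proof -
  have "diag_mat a $ i $ j * c $ j = (if j = i then of_real (a i) * c $ i else 0)" for i j
    by (simp add: diag_mat_def)
  then show ?thesis by (simp add: matrix_vector_mult_def vec_eq_iff)
qed

text \<open>For Hermitian matrices the support is the orthogonal complement of the kernel.\<close>
lemma hermitian_supp_subset_if_kernel_subset:
  assumes B: "hermitian B" and A: "hermitian A" and ker: "\<And>w. B *v w = 0 \<Longrightarrow> A *v w = 0"
  shows "supp A \<subseteq> supp B"
proof
  fix w assume "w \<in> supp A"
  then obtain z where wz: "w = A *v z" by (auto simp: supp_def)
  obtain U l where U: "unitary_mat U" and Bd: "B = U ** diag_mat l ** cadj U"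
    using hermitian_spectral_decomposition[OF B] by blast
  have UU: "cadj U *v (U *v x) = x" "U *v (cadj U *v x) = x" for x
    using U by (simp_all add: unitary_mat_def matrix_vector_mul_assoc)
  define c where "c = cadj U *v w"
  have c0: "c $ i = 0" if "l i = 0" for i
  proof -
    have "U $ r $ k * axis i 1 $ k = (if k = i then U $ r $ i else 0)" for r k
      by (simp add: axis_def)
    then have col: "column i U = U *v axis i 1"
      by (simp add: column_def matrix_vector_mult_def vec_eq_iff)
    have "diag_mat l *v axis i 1 = 0"
      using that by (simp add: diag_mat_matrix_vector_mult axis_def vec_eq_iff)
    then have "B *v column i U = 0"
      by (simp add: Bd col UU flip: matrix_vector_mul_assoc)
    then have "A *v column i U = 0" by (rule ker)
    have "c $ i = cinner (column i U) w"
      by (simp add: c_def cadj_def matrix_vector_mult_def cinner_def column_def)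
    also have "\<dots> = cinner (A *v column i U) z" using A by (simp add: wz hermitian_def)
    finally show ?thesis using \<open>A *v column i U = 0\<close> by simp
  qed
  define y where "y = U *v (diag_mat (\<lambda>i. if l i = 0 then 0 else 1 / l i) *v c)"
  have "diag_mat l *v (diag_mat (\<lambda>i. if l i = 0 then 0 else 1 / l i) *v c) = c"
    using c0 by (auto simp: diag_mat_matrix_vector_mult vec_eq_iff)
  then have "B *v y = U *v c"
    by (simp add: y_def Bd UU flip: matrix_vector_mul_assoc)
  also have "\<dots> = w" by (simp add: c_def UU)
  finally show "w \<in> supp B" by (auto simp: supp_def)
qed

lemma tpcp_kernel_subset:
  assumes N: "tpcp N" and \<sigma>: "psd \<sigma>"
    and ker: "\<And>w. \<sigma> *v w = 0 \<Longrightarrow> \<rho> *v w = 0" and v: "N \<sigma> *v v = 0"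
  shows "N \<rho> *v v = 0"
proof -
  obtain K and m :: nat where Nf: "N = (\<lambda>X. \<Sum>k<m. K k ** X ** cadj (K k))"
    using N by (rule tpcpE)
  define t where "t k = cinner (cadj (K k) *v v) (\<sigma> *v (cadj (K k) *v v))" for k
  have t: "t k \<in> \<real> \<and> 0 \<le> Re (t k)" for k using \<sigma> unfolding psd_def t_def by blast
  have "(\<Sum>k<m. Re (t k)) = Re (cinner v (N \<sigma> *v v))"
    by (simp add: Nf t_def Re_sum matrix_vector_mult_sum_left cinner_sum_right cinner_kraus)
  then have "(\<Sum>k<m. Re (t k)) = 0" using v by simp
  then have "Re (t k) = 0" if "k < m" for k using t that by (simp add: sum_nonneg_eq_0_iff)
  then have "t k = 0" if "k < m" for k
    using t[of k] that by (simp add: complex_eq_iff complex_is_Real_iff)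
  then have "\<rho> *v (cadj (K k) *v v) = 0" if "k < m" for k
    using that psd_quadratic_form_zero_imp_zero[OF \<sigma>] ker unfolding t_def by blast
  then show ?thesis
    by (simp add: Nf matrix_vector_mult_sum_left flip: matrix_vector_mul_assoc)
qed

lemma tpcp_supp_mono:
  assumes N: "tpcp N" and \<rho>: "psd \<rho>" and \<sigma>: "psd \<sigma>" and supp: "supp \<rho> \<subseteq> supp \<sigma>"
  shows "supp (N \<rho>) \<subseteq> supp (N \<sigma>)"
proof (rule hermitian_supp_subset_if_kernel_subset)
  show "hermitian (N \<sigma>)" "hermitian (N \<rho>)"
    using tpcp_psd[OF N] psd_hermitian \<rho> \<sigma> by auto
  have "\<rho> *v w = 0" if "\<sigma> *v w = 0" for w
    by (rule hermitian_kernel_subset_if_supp_subset[OF psd_hermitian[OF \<rho>]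
          psd_hermitian[OF \<sigma>] supp that])
  then show "N \<rho> *v w = 0" if "N \<sigma> *v w = 0" for w
    using tpcp_kernel_subset[OF N \<sigma> _ that] by blast
qed

section \<open>Lower semicontinuity of the measured relative entropy\<close>

lemma le_Liminf_iff_real:
  fixes X :: "_ \<Rightarrow> ereal"
  shows "C \<le> Liminf F X \<longleftrightarrow> (\<forall>r. ereal r < C \<longrightarrow> eventually (\<lambda>x. ereal r < X x) F)"
  unfolding le_Liminf_iff
proof (intro iffI allI impI)
  fix y assume real: "\<forall>r. ereal r < C \<longrightarrow> eventually (\<lambda>x. ereal r < X x) F" and "y < C"
  then obtain r where "y < ereal r" "ereal r < C" using ereal_dense2 by blast
  with real have "eventually (\<lambda>x. ereal r < X x) F" by blast
  then show "eventually (\<lambda>x. y < X x) F"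
    by eventually_elim (rule less_trans[OF \<open>y < ereal r\<close>])
qed auto

lemma ereal_less_add_splitE:
  fixes a b :: ereal
  assumes "ereal r < a + b" "a \<noteq> -\<infinity>" "b \<noteq> -\<infinity>"
  obtains s where "ereal s < a" "ereal (r - s) < b"
proof (cases b)
  case (real z)
  then have "ereal (r - z) < a" using assms by (cases a) auto
  then obtain s where "ereal (r - z) < ereal s" "ereal s < a" using ereal_dense2 by blast
  with real show ?thesis by (intro that) auto
next
  case PInf
  obtain s where "ereal s < a" using ereal_dense2[of "-\<infinity>" a] assms by auto
  with PInf show ?thesis by (intro that) auto
qed (use assms in simp)

lemma le_Liminf_add:
  fixes f g :: "_ \<Rightarrow> ereal"
  assumes f: "a \<le> Liminf F f" and g: "b \<le> Liminf F g" and "a \<noteq> -\<infinity>" "b \<noteq> -\<infinity>"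
  shows "a + b \<le> Liminf F (\<lambda>x. f x + g x)"
  unfolding le_Liminf_iff_real
proof (intro allI impI)
  fix r assume "ereal r < a + b"
  then obtain s where s: "ereal s < a" "ereal (r - s) < b"
    using assms ereal_less_add_splitE by blast
  have "eventually (\<lambda>x. ereal s < f x) F" "eventually (\<lambda>x. ereal (r - s) < g x) F"
    using f g s unfolding le_Liminf_iff_real by auto
  then show "eventually (\<lambda>x. ereal r < f x + g x) F"
  proof eventually_elim
    case (elim x)
    then have "ereal s + ereal (r - s) < f x + g x" by (rule ereal_add_strict_mono2)
    then show ?case by simp
  qed
qed

lemma sum_ereal_neq_MInfty:
  fixes v :: "_ \<Rightarrow> ereal"
  shows "(\<And>i. i \<in> A \<Longrightarrow> v i \<noteq> -\<infinity>) \<Longrightarrow> (\<Sum>i\<in>A. v i) \<noteq> -\<infinity>"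
proof (induct A rule: infinite_finite_induct)
  case (insert x A)
  then show ?case by (cases "v x"; cases "\<Sum>i\<in>A. v i") auto
qed auto

lemma le_Liminf_sum:
  fixes f :: "_ \<Rightarrow> _ \<Rightarrow> ereal"
  assumes "finite A" "\<And>i. i \<in> A \<Longrightarrow> v i \<le> Liminf F (f i)" "\<And>i. i \<in> A \<Longrightarrow> v i \<noteq> -\<infinity>"
  shows "(\<Sum>i\<in>A. v i) \<le> Liminf F (\<lambda>x. \<Sum>i\<in>A. f i x)"
  using assms
proof (induct A rule: finite_induct)
  case (insert i A)
  then show ?case by (simp add: le_Liminf_add sum_ereal_neq_MInfty)
qed (simp add: le_Liminf_iff)

definition rel_ent_term :: "real \<Rightarrow> real \<Rightarrow> ereal" where
  "rel_ent_term p q = (if p = 0 then 0 else if q = 0 then \<infinity> else ereal (p * (ln p - ln q)))"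

lemma rel_ent_term_neq_MInfty: "rel_ent_term p q \<noteq> -\<infinity>"
  by (simp add: rel_ent_term_def)

lemma classical_rel_ent_eq_sum: "classical_rel_ent n p q = (\<Sum>x<n. rel_ent_term (p x) (q x))"
proof (cases "\<forall>x<n. q x = 0 \<longrightarrow> p x = 0")
  case True
  have "(\<Sum>x<n. rel_ent_term (p x) (q x))
      = (\<Sum>x<n. ereal (if p x \<noteq> 0 then p x * (ln (p x) - ln (q x)) else 0))"
    using True by (intro sum.cong refl) (auto simp: rel_ent_term_def)
  also have "\<dots> = ereal (\<Sum>x\<in>{x\<in>{..<n}. p x \<noteq> 0}. p x * (ln (p x) - ln (q x)))"
    by (subst sum.inter_filter) auto
  finally show ?thesis using True by (simp add: classical_rel_ent_def conj_commute)
next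
  case False
  then obtain x where "x < n" "rel_ent_term (p x) (q x) = \<infinity>" by (auto simp: rel_ent_term_def)
  then have "(\<Sum>x<n. rel_ent_term (p x) (q x)) = \<infinity>" by (auto simp: sum_Pinfty)
  then show ?thesis using False by (simp add: classical_rel_ent_def)
qed

lemma xlogx_minus_mult_le_rel_ent_term:
  assumes "p \<ge> 0" "q \<ge> 0"
  shows "ereal (xlogx p - p * q) \<le> rel_ent_term p q"
proof (cases "p > 0 \<and> q > 0")
  case True
  then have "p * ln q \<le> p * q"
    using ln_le_minus_one[of q] by (intro mult_left_mono) auto
  with True show ?thesis by (simp add: rel_ent_term_def xlogx_def right_diff_distrib)
qed (use assms in \<open>auto simp: rel_ent_term_def xlogx_def\<close>)

lemma mult_ln_diff_gt:
  fixes p q K :: real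
  assumes "p > 0" "q > 0" "q < exp (- K)"
  shows "p * K - 1 < p * (ln p - ln q)"
proof -
  have "- ln p \<le> 1 / p - 1"
    using ln_le_minus_one[of "1 / p"] assms by (simp add: ln_div)
  then have "p - 1 \<le> p * ln p"
    using assms by (simp add: field_simps)
  moreover have "ln q < ln (exp (- K))" using assms by (subst ln_less_cancel_iff) auto
  then have "K < - ln q" by simp
  then have "p * K < p * (- ln q)" using assms by (intro mult_strict_left_mono)
  ultimately show ?thesis using assms by (simp add: right_diff_distrib)
qed

lemma eventually_gt_rel_ent_term_at_zero:
  assumes p: "(p \<longlongrightarrow> p0) F" and q: "(q \<longlongrightarrow> 0) F" and "p0 > 0"
    and q_nonneg: "eventually (\<lambda>y. q y \<ge> 0) F"
  shows "eventually (\<lambda>y. ereal r < rel_ent_term (p y) (q y)) F"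
proof -
  define K where "K = max 0 (2 * (r + 1) / p0)"
  have "eventually (\<lambda>y. p y > p0 / 2) F" using order_tendstoD(1)[OF p, of "p0 / 2"] \<open>p0 > 0\<close> by simp
  moreover have "eventually (\<lambda>y. q y < exp (- K)) F" using order_tendstoD(2)[OF q] by simp
  ultimately show ?thesis using q_nonneg
  proof eventually_elim
    case (elim y)
    have "2 * (r + 1) / p0 \<le> K" by (simp add: K_def)
    then have "r + 1 \<le> p0 / 2 * K" using \<open>p0 > 0\<close> by (simp add: field_simps)
    also have "\<dots> \<le> p y * K" using elim by (intro mult_right_mono) (auto simp: K_def)
    finally have "r < p y * (ln (p y) - ln (q y))" if "q y > 0"
      using mult_ln_diff_gt[of "p y" "q y" K] elim that \<open>p0 > 0\<close> by linarith
    then show ?case using elim \<open>p0 > 0\<close> by (cases "q y = 0") (auto simp: rel_ent_term_def)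
  qed
qed

lemma rel_ent_term_le_Liminf:
  assumes p: "(p \<longlongrightarrow> p0) F" and q: "(q \<longlongrightarrow> q0) F"
    and nonneg: "eventually (\<lambda>y. p y \<ge> 0 \<and> q y \<ge> 0) F" and "p0 \<ge> 0" "q0 \<ge> 0"
  shows "rel_ent_term p0 q0 \<le> Liminf F (\<lambda>y. rel_ent_term (p y) (q y))"
  unfolding le_Liminf_iff_real
proof (intro allI impI)
  fix r assume r: "ereal r < rel_ent_term p0 q0"
  consider "p0 = 0" | "p0 > 0" "q0 > 0" | "p0 > 0" "q0 = 0"
    using \<open>p0 \<ge> 0\<close> \<open>q0 \<ge> 0\<close> by linarith
  then show "eventually (\<lambda>y. ereal r < rel_ent_term (p y) (q y)) F"
  proof cases
    case 1
    have "((\<lambda>y. xlogx (p y)) \<longlongrightarrow> xlogx p0) F"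
      by (rule continuous_on_tendsto_compose[OF continuous_on_xlogx p])
        (use \<open>p0 \<ge> 0\<close> nonneg in \<open>auto elim: eventually_mono\<close>)
    then have "((\<lambda>y. xlogx (p y) - p y * q y) \<longlongrightarrow> 0) F"
      using tendsto_diff[OF _ tendsto_mult[OF p q]] 1 by (fastforce simp: xlogx_def)
    moreover have "r < 0" using r 1 by (simp add: rel_ent_term_def)
    ultimately have "eventually (\<lambda>y. r < xlogx (p y) - p y * q y) F"
      by (simp add: order_tendstoD(1))
    with nonneg show ?thesis
    proof eventually_elim
      case (elim y)
      then have "ereal r < ereal (xlogx (p y) - p y * q y)" by simp
      also have "\<dots> \<le> rel_ent_term (p y) (q y)"
        using elim by (intro xlogx_minus_mult_le_rel_ent_term) auto
      finally show ?case .
    qed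
  next
    case 2
    have "eventually (\<lambda>y. p y > 0 \<and> q y > 0) F"
      using order_tendstoD(1)[OF p, of 0] order_tendstoD(1)[OF q, of 0] 2 eventually_conj by blast
    moreover have "((\<lambda>y. p y * (ln (p y) - ln (q y))) \<longlongrightarrow> p0 * (ln p0 - ln q0)) F"
      using 2 by (intro tendsto_intros p q) auto
    then have "eventually (\<lambda>y. r < p y * (ln (p y) - ln (q y))) F"
      using r 2 by (simp add: order_tendstoD(1) rel_ent_term_def)
    ultimately show ?thesis by eventually_elim (simp add: rel_ent_term_def)
  next
    case 3
    with p q nonneg show ?thesis
      by (intro eventually_gt_rel_ent_term_at_zero) (auto elim: eventually_mono)
  qed
qed

lemma classical_rel_ent_le_Liminf:
  assumes "\<And>x. x < n \<Longrightarrow> ((\<lambda>y. P y x) \<longlongrightarrow> P0 x) F"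
    and "\<And>x. x < n \<Longrightarrow> ((\<lambda>y. Q y x) \<longlongrightarrow> Q0 x) F"
    and "eventually (\<lambda>y. \<forall>x<n. P y x \<ge> 0 \<and> Q y x \<ge> 0) F"
    and "\<And>x. x < n \<Longrightarrow> P0 x \<ge> 0 \<and> Q0 x \<ge> 0"
  shows "classical_rel_ent n P0 Q0 \<le> Liminf F (\<lambda>y. classical_rel_ent n (P y) (Q y))"
  unfolding classical_rel_ent_eq_sum
  using assms by (intro le_Liminf_sum rel_ent_term_le_Liminf rel_ent_term_neq_MInfty)
    (auto elim: eventually_mono)

lemma SUP_le_Liminf_SUP:
  fixes g :: "_ \<Rightarrow> _ \<Rightarrow> 'a::complete_linorder"
  assumes "\<And>i. i \<in> I \<Longrightarrow> h i \<le> Liminf F (g i)"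
  shows "(SUP i\<in>I. h i) \<le> Liminf F (\<lambda>x. SUP i\<in>I. g i x)"
proof (rule SUP_least)
  fix i assume "i \<in> I"
  then have "Liminf F (g i) \<le> Liminf F (\<lambda>x. SUP i\<in>I. g i x)"
    by (intro Liminf_mono always_eventually allI SUP_upper)
  with assms[OF \<open>i \<in> I\<close>] show "h i \<le> Liminf F (\<lambda>x. SUP i\<in>I. g i x)" by (rule order.trans)
qed

lemma meas_rel_ent_le_Liminf:
  fixes f g :: "'z::topological_space \<Rightarrow> complex^'n^'n"
  assumes f: "continuous_on S f" and g: "continuous_on S g"
    and psd: "\<And>x. x \<in> S \<Longrightarrow> psd (f x) \<and> psd (g x)" and "x \<in> S"
  shows "meas_rel_ent (f x) (g x) \<le> Liminf (at x within S) (\<lambda>y. meas_rel_ent (f y) (g y))"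
  unfolding meas_rel_ent_def
proof (rule SUP_le_Liminf_SUP, clarify)
  fix n and M :: "nat \<Rightarrow> complex^'n^'n" assume "povm n M"
  then have M: "psd (M i)" if "i < n" for i using that by (simp add: povm_def)
  have "eventually (\<lambda>y. y \<in> S) (at x within S)" by (simp add: eventually_at_filter)
  then have "eventually (\<lambda>y. \<forall>i<n. 0 \<le> Re (trace (f y ** M i)) \<and> 0 \<le> Re (trace (g y ** M i)))
      (at x within S)"
    by eventually_elim (use psd M in \<open>auto intro: psd_trace_mult_nonneg\<close>)
  moreover have "((\<lambda>y. Re (trace (h y ** M i))) \<longlongrightarrow> Re (trace (h x ** M i))) (at x within S)"
    if "continuous_on S h" for h :: "'z \<Rightarrow> complex^'n^'n" and i
    using continuous_on_Re_trace[OF continuous_on_matrix_mult[OF that continuous_on_const]] \<open>x \<in> S\<close>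
    unfolding continuous_on_def by blast
  ultimately show "classical_rel_ent n (\<lambda>i. Re (trace (f x ** M i))) (\<lambda>i. Re (trace (g x ** M i)))
      \<le> Liminf (at x within S)
          (\<lambda>y. classical_rel_ent n (\<lambda>i. Re (trace (f y ** M i))) (\<lambda>i. Re (trace (g y ** M i))))"
    using f g psd M \<open>x \<in> S\<close>
    by (intro classical_rel_ent_le_Liminf) (auto intro: psd_trace_mult_nonneg)
qed

section \<open>Upper semicontinuity of the entropy difference\<close>

lemma usc_on_cong: "(\<And>x. x \<in> S \<Longrightarrow> f x = g x) \<Longrightarrow> usc_on S f \<longleftrightarrow> usc_on S g"
  unfolding usc_on_def eventually_at_filter by (auto elim!: eventually_mono)

lemma usc_on_diff:
  fixes G :: "_ \<Rightarrow> real" and H :: "_ \<Rightarrow> ereal"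
  assumes G: "continuous_on S G" and H: "\<And>x. x \<in> S \<Longrightarrow> H x \<le> Liminf (at x within S) H"
  shows "usc_on S (\<lambda>x. ereal (G x) - H x)"
  unfolding usc_on_def
proof (intro ballI allI impI)
  fix x c assume "x \<in> S" and less: "ereal (G x) - H x < c"
  have H_near: "eventually (\<lambda>y. ereal r < H y) (at x within S)" if "ereal r < H x" for r
    using H[OF \<open>x \<in> S\<close>] that unfolding le_Liminf_iff by blast
  show "eventually (\<lambda>y. ereal (G y) - H y < c) (at x within S)"
  proof (cases c)
    case (real c')
    have "ereal (G x - c') < H x"
      using less real by (cases "H x") auto
    then obtain r where r: "G x - c' < r" "ereal r < H x" using ereal_dense2 by force
    have "eventually (\<lambda>y. G y < r + c') (at x within S)"
      using G \<open>x \<in> S\<close> r(1) unfolding continuous_on_def by (auto intro: order_tendstoD(2))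
    with H_near[OF r(2)] show ?thesis
    proof eventually_elim
      case (elim y)
      then show ?case using real by (cases "H y") auto
    qed
  next
    case PInf
    have "-\<infinity> < H x" using less PInf by (cases "H x") auto
    then obtain r where "ereal r < H x" using ereal_dense2 by blast
    then have "eventually (\<lambda>y. ereal r < H y) (at x within S)" by (rule H_near)
    then show ?thesis
    proof eventually_elim
      case (elim y)
      then show ?case using PInf by (cases "H y") auto
    qed
  qed (use less in simp)
qed

definition rel_ent_formula :: "complex^'n^'n \<Rightarrow> complex^'n^'n \<Rightarrow> real" where
  "rel_ent_formula \<rho> \<sigma> = Re (trace (\<rho> ** (mat_log \<rho> - mat_log \<sigma>)))"

lemma rel_ent_eq_formula: "supp \<rho> \<subseteq> supp \<sigma> \<Longrightarrow> rel_ent \<rho> \<sigma> = ereal (rel_ent_formula \<rho> \<sigma>)"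
  by (simp add: rel_ent_def rel_ent_formula_def)

lemma continuous_on_rel_ent_formula:
  "continuous_on {\<rho> :: complex^'n^'n. density \<rho>} (\<lambda>\<rho>. rel_ent_formula \<rho> \<sigma>)"
proof -
  have "rel_ent_formula \<rho> \<sigma> = neg_entropy \<rho> - Re (trace (\<rho> ** mat_log \<sigma>))" for \<rho>
    by (simp add: rel_ent_formula_def neg_entropy_def matrix_diff_ldistrib trace_sub)
  then show ?thesis
    by (simp add: continuous_on_neg_entropy continuous_on_diff continuous_on_Re_trace
        continuous_on_matrix_mult)
qed

lemma rel_ent_diff_channel_eq_formula:
  assumes N: "tpcp N" and \<sigma>: "psd \<sigma>" and \<rho>: "\<rho> \<in> S_sub \<sigma>"
  shows "rel_ent \<rho> \<sigma> - rel_ent (N \<rho>) (N \<sigma>)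
    = ereal (rel_ent_formula \<rho> \<sigma> - rel_ent_formula (N \<rho>) (N \<sigma>))"
proof -
  have "psd \<rho>" "supp \<rho> \<subseteq> supp \<sigma>" using \<rho> by (auto simp: S_sub_def density_def)
  then have "supp (N \<rho>) \<subseteq> supp (N \<sigma>)" using tpcp_supp_mono[OF N _ \<sigma>] by blast
  then show ?thesis using \<open>supp \<rho> \<subseteq> supp \<sigma>\<close> by (simp add: rel_ent_eq_formula)
qed

theorem lemma6:
  fixes T :: "complex^'b^'b \<Rightarrow> complex^'a^'a"
    and \<sigma> :: "complex^'a^'a"
    and N :: "complex^'a^'a \<Rightarrow> complex^'b^'b"
  assumes "tpcp T" and "psd \<sigma>" and "tpcp N"
  shows "usc_on (S_sub \<sigma>)
           (\<lambda>\<rho>. rel_ent \<rho> \<sigma> - rel_ent (N \<rho>) (N \<sigma>) - meas_rel_ent \<rho> ((T \<circ> N) \<rho>))"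
proof -
  note T = \<open>tpcp T\<close> and \<sigma> = \<open>psd \<sigma>\<close> and N = \<open>tpcp N\<close>
  define G where "G \<rho> = rel_ent_formula \<rho> \<sigma> - rel_ent_formula (N \<rho>) (N \<sigma>)" for \<rho>
  have S: "density \<rho>" "supp \<rho> \<subseteq> supp \<sigma>" if "\<rho> \<in> S_sub \<sigma>" for \<rho>
    using that by (auto simp: S_sub_def)
  have "continuous_on (S_sub \<sigma>) G"
    unfolding G_def using S tpcp_density[OF N]
    by (intro continuous_on_diff continuous_on_subset[OF continuous_on_rel_ent_formula]
        continuous_on_compose2[OF continuous_on_rel_ent_formula tpcp_continuous_on[OF N]]) auto
  moreover have "meas_rel_ent \<rho> ((T \<circ> N) \<rho>)
      \<le> Liminf (at \<rho> within S_sub \<sigma>) (\<lambda>\<rho>. meas_rel_ent \<rho> ((T \<circ> N) \<rho>))" if "\<rho> \<in> S_sub \<sigma>" for \<rho>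
  proof (rule meas_rel_ent_le_Liminf[OF continuous_on_id _ _ that])
    show "continuous_on (S_sub \<sigma>) (T \<circ> N)"
      using T N by (intro continuous_on_compose tpcp_continuous_on)
    show "psd \<rho>' \<and> psd ((T \<circ> N) \<rho>')" if "\<rho>' \<in> S_sub \<sigma>" for \<rho>'
      using S[OF that] T N by (simp add: density_def tpcp_psd)
  qed
  ultimately have "usc_on (S_sub \<sigma>) (\<lambda>\<rho>. ereal (G \<rho>) - meas_rel_ent \<rho> ((T \<circ> N) \<rho>))"
    by (rule usc_on_diff)
  moreover have "rel_ent \<rho> \<sigma> - rel_ent (N \<rho>) (N \<sigma>) - meas_rel_ent \<rho> ((T \<circ> N) \<rho>)
      = ereal (G \<rho>) - meas_rel_ent \<rho> ((T \<circ> N) \<rho>)" if "\<rho> \<in> S_sub \<sigma>" for \<rho>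
    unfolding G_def rel_ent_diff_channel_eq_formula[OF N \<sigma> that] ..
  ultimately show ?thesis by (rule usc_on_cong[THEN iffD2, rotated])
qed

end
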